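(* Let $F_1,F_2$ be bijections of $\mathbb F_2^m$ with $F_1(0)=F_2(0)=0$ such that the self-embeddings $S\cup F_1(S)$ and $S\cup F_2(S)$ are isomorphic, where $S=STS(\mathcal H^n)$. Then $F_1$ and $F_2$ are CCZ-equivalent.
   Context: $n=2^m-1$; identify $\mathbb F_2^m$ with $GF(2^m)$. $S=STS(\mathcal H^n)$ is the set of 3-subsets $\{a,b,c\}$ of nonzero elements with $a+b+c=0$; $F(S)=\{\{F(a),F(b),F(c)\}:\{a,b,c\}\in S\}$. Self-embeddings $S\cup F_1(S)$, $S\cup F_2(S)$ are isomorphic if there is a permutation $\sigma$ of the nonzero elements with either $\sigma(S)=S,\sigma(F_1(S))=F_2(S)$ or $\sigma(S)=F_2(S),\sigma(F_1(S))=S$. $\mathcal C_F$ is the binary linear code of length $n$ with parity-check matrix whose columns are $\binom{x}{F(x)}$ for nonzero $x\in\mathbb F_2^m$; $\mathcal C_F^*$ is its extension by an overall parity-check bit. $F_1,F_2$ are called CCZ-equivalent if $\mathcal C^*_{F_1}$ and $\mathcal C^*_{F_2}$ are equivalent codes (one obtained from the other by a coordinate permutation). *)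

theory Defs
  imports "HOL-Analysis.Analysis" "HOL-Library.Z2"
begin

(* F_2^m is modelled as the type  bit ^ 'm  (m = CARD('m)); only its additive
   structure is used by the notions below. *)

definition nonzeros :: "(bit ^ 'm) set" where
  "nonzeros = UNIV - {0}"

definition STS :: "(bit ^ 'm) set set" where
  "STS = {{a, b, c} | a b c. a \<in> nonzeros \<and> b \<in> nonzeros \<and> c \<in> nonzeros
            \<and> a \<noteq> b \<and> a \<noteq> c \<and> b \<noteq> c \<and> a + b + c = 0}"

definition blocks_image :: "('a \<Rightarrow> 'b) \<Rightarrow> 'a set set \<Rightarrow> 'b set set" where
  "blocks_image F S = (\<lambda>T. F ` T) ` S"

definition selfemb_iso :: "(bit ^ 'm \<Rightarrow> bit ^ 'm) \<Rightarrow> (bit ^ 'm \<Rightarrow> bit ^ 'm) \<Rightarrow> bool" where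
  "selfemb_iso F1 F2 \<longleftrightarrow> (\<exists>\<sigma>. bij_betw \<sigma> nonzeros nonzeros \<and>
      ((blocks_image \<sigma> STS = STS \<and> blocks_image \<sigma> (blocks_image F1 STS) = blocks_image F2 STS)
     \<or> (blocks_image \<sigma> STS = blocks_image F2 STS \<and> blocks_image \<sigma> (blocks_image F1 STS) = STS)))"

(* The code C_F: words indexed by the nonzero vectors (represented as functions on
   bit ^ 'm that vanish at 0) lying in the kernel of the parity-check matrix whose
   columns are (x, F x), x nonzero. *)
definition code_F :: "(bit ^ 'm \<Rightarrow> bit ^ 'm) \<Rightarrow> (bit ^ 'm \<Rightarrow> bit) set" where
  "code_F F = {c. c 0 = 0 \<and>
      (\<Sum>x\<in>nonzeros. c x *s x) = 0 \<and> (\<Sum>x\<in>nonzeros. c x *s F x) = 0}"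

(* Extension by an overall parity-check bit, placed at the (otherwise unused)
   coordinate 0; the extended code has length n + 1 = 2^m. *)
definition extend_code :: "(bit ^ 'm \<Rightarrow> bit) set \<Rightarrow> (bit ^ 'm \<Rightarrow> bit) set" where
  "extend_code C = {c(0 := (\<Sum>x\<in>nonzeros. c x)) | c. c \<in> C}"

definition code_F_ext :: "(bit ^ 'm \<Rightarrow> bit ^ 'm) \<Rightarrow> (bit ^ 'm \<Rightarrow> bit) set" where
  "code_F_ext F = extend_code (code_F F)"

definition equiv_codes :: "('i \<Rightarrow> bit) set \<Rightarrow> ('i \<Rightarrow> bit) set \<Rightarrow> bool" where
  "equiv_codes C1 C2 \<longleftrightarrow> (\<exists>\<pi>. bij \<pi> \<and> C2 = (\<lambda>c. c \<circ> \<pi>) ` C1)"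

definition CCZ_equivalent :: "(bit ^ 'm \<Rightarrow> bit ^ 'm) \<Rightarrow> (bit ^ 'm \<Rightarrow> bit ^ 'm) \<Rightarrow> bool" where
  "CCZ_equivalent F1 F2 \<longleftrightarrow> equiv_codes (code_F_ext F1) (code_F_ext F2)"

end

theory Submission
  imports Defs
begin

text \<open>An isomorphism \<open>\<sigma>\<close> of the two self-embeddings either fixes \<open>S\<close> or swaps \<open>S\<close> with the
  second copy. Composing \<open>\<sigma>\<close> with \<open>F\<^sub>1\<close> and \<open>F\<^sub>2\<^sup>-\<^sup>1\<close> yields permutations of the nonzero vectors
  mapping blocks of \<open>S\<close> to blocks of \<open>S\<close>; such a permutation is additive, because \<open>a + b\<close> is the
  third point of the block through \<open>a\<close> and \<open>b\<close>, hence linear. In both cases this produces an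
  invertible linear map of \<open>\<bbbF>\<^sub>2\<^sup>m \<times> \<bbbF>\<^sub>2\<^sup>m\<close> carrying the graph of \<open>F\<^sub>1\<close> onto the graph of
  \<open>F\<^sub>2\<close>, and the induced bijection of coordinates carries \<open>\<C>\<^sup>*\<^sub>F\<^sub>1\<close> onto \<open>\<C>\<^sup>*\<^sub>F\<^sub>2\<close>.\<close>

instance bit :: finite
proof
  have "(UNIV :: bit set) = {0, 1}"
    by (auto intro: bit.exhaust)
  then show "finite (UNIV :: bit set)"
    by (metis finite.emptyI finite.insertI)
qed

lemma uminus_bit_vec [simp]: "- v = v" for v :: "bit ^ 'm"
  by (simp add: vec_eq_iff)

lemma bit_add_eq_0_iff: "a + b = 0 \<longleftrightarrow> a = b" for a b :: bit
  by (cases a; cases b) simp_all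

lemma bit_vec_add_eq_0_iff: "u + v = 0 \<longleftrightarrow> u = v" for u v :: "bit ^ 'm"
  by (auto simp: add_eq_0_iff)

lemma bit_vec_add_self [simp]: "v + v = 0" for v :: "bit ^ 'm"
  by (metis bit_vec_add_eq_0_iff)

lemma sum_scale_bit: "(\<Sum>x\<in>UNIV. c x *s h x) = (\<Sum>x | c x = 1. h x)"
  for c :: "'a::finite \<Rightarrow> bit" and h :: "'a \<Rightarrow> bit ^ 'm"
proof -
  have "(\<Sum>x\<in>UNIV. c x *s h x) = (\<Sum>x\<in>UNIV. if c x = 1 then h x else 0)"
    by (rule sum.cong) (auto intro: bit.exhaust)
  then show ?thesis
    using sum.inter_filter[of UNIV h "\<lambda>x. c x = 1"] by simp
qed

lemma code_F_ext_eq: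
  fixes F :: "bit ^ 'm \<Rightarrow> bit ^ 'm"
  assumes "F 0 = 0"
  shows "code_F_ext F = {e. sum e UNIV = 0 \<and> (\<Sum>x | e x = 1. (x, F x)) = 0}"
proof -
  have UNIV_split: "UNIV = insert 0 nonzeros" and "0 \<notin> nonzeros"
    by (auto simp: nonzeros_def)
  then have sum_UNIV: "sum h UNIV = h 0 + sum h nonzeros" for h :: "bit ^ 'm \<Rightarrow> 'b::comm_monoid_add"
    by (metis finite sum.insert)
  have graph_sum_eq_0:
    "(\<Sum>x | e x = 1. (x, F x)) = 0 \<longleftrightarrow>
       (\<Sum>x\<in>nonzeros. e x *s x) = 0 \<and> (\<Sum>x\<in>nonzeros. e x *s F x) = 0" for e
    by (simp add: prod_eq_iff fst_sum snd_sum flip: sum_scale_bit) (simp add: sum_UNIV assms)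
  have nonzeros_upd: "(\<Sum>x\<in>nonzeros. h (if x = 0 then y else c x) x) = (\<Sum>x\<in>nonzeros. h (c x) x)"
    for h :: "bit \<Rightarrow> bit ^ 'm \<Rightarrow> 'b::comm_monoid_add" and c y
    using \<open>0 \<notin> nonzeros\<close> by (intro sum.cong) auto
  show ?thesis
  proof (intro set_eqI iffI)
    fix e assume "e \<in> code_F_ext F"
    then obtain c where "c \<in> code_F F" and e: "e = c(0 := sum c nonzeros)"
      unfolding code_F_ext_def extend_code_def by auto
    then show "e \<in> {e. sum e UNIV = 0 \<and> (\<Sum>x | e x = 1. (x, F x)) = 0}"
      unfolding code_F_def graph_sum_eq_0
      using nonzeros_upd[of "\<lambda>a x. a"] nonzeros_upd[of "\<lambda>a x. a *s F x"]
      by (simp add: sum_UNIV nonzeros_upd)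
  next
    fix e :: "bit ^ 'm \<Rightarrow> bit"
    assume "e \<in> {e. sum e UNIV = 0 \<and> (\<Sum>x | e x = 1. (x, F x)) = 0}"
    then have "e 0 + sum e nonzeros = 0" and "(\<Sum>x\<in>nonzeros. e x *s x) = 0"
      and "(\<Sum>x\<in>nonzeros. e x *s F x) = 0"
      by (simp_all add: sum_UNIV graph_sum_eq_0 del: add_eq_0_iff)
    moreover from this(1) have "e = (e(0 := 0))(0 := sum (e(0 := 0)) nonzeros)"
      using nonzeros_upd[of "\<lambda>a x. a"] by (simp only: bit_add_eq_0_iff) (simp add: fun_upd_idem)
    ultimately have "e(0 := 0) \<in> code_F F" and "e = (e(0 := 0))(0 := sum (e(0 := 0)) nonzeros)"
      using nonzeros_upd[of "\<lambda>a x. a *s x"] nonzeros_upd[of "\<lambda>a x. a *s F x"]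
      by (simp_all add: code_F_def)
    then show "e \<in> code_F_ext F"
      unfolding code_F_ext_def extend_code_def by blast
  qed
qed

lemma equiv_codes_if_bij_preimage:
  assumes "bij \<pi>" and "\<And>d. d \<in> C2 \<longleftrightarrow> d \<circ> \<pi> \<in> C1"
  shows "equiv_codes C1 C2"
proof -
  have "C2 = (\<lambda>c. c \<circ> inv \<pi>) ` C1"
  proof (intro set_eqI iffI)
    fix d assume "d \<in> C2"
    moreover have "d = d \<circ> \<pi> \<circ> inv \<pi>"
      using \<open>bij \<pi>\<close> by (simp add: fun_eq_iff bij_is_surj surj_f_inv_f)
    ultimately show "d \<in> (\<lambda>c. c \<circ> inv \<pi>) ` C1"
      using assms(2) by blast
  next
    fix d assume "d \<in> (\<lambda>c. c \<circ> inv \<pi>) ` C1"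
    then obtain c where "c \<in> C1" and "d = c \<circ> inv \<pi>"
      by blast
    moreover have "c \<circ> inv \<pi> \<circ> \<pi> = c"
      using \<open>bij \<pi>\<close> by (simp add: fun_eq_iff bij_is_inj)
    ultimately show "d \<in> C2"
      using assms(2) by simp
  qed
  then show ?thesis
    unfolding equiv_codes_def using \<open>bij \<pi>\<close> bij_imp_bij_inv by blast
qed

lemma CCZ_equivalent_if_graph_map:
  fixes F1 F2 \<phi> :: "bit ^ 'm \<Rightarrow> bit ^ 'm" and \<Theta> :: "(bit ^ 'm) \<times> (bit ^ 'm) \<Rightarrow> (bit ^ 'm) \<times> (bit ^ 'm)"
  assumes "F1 0 = 0" and "F2 0 = 0" and "bij \<phi>"
    and "Modules.additive \<Theta>" and kernel: "\<And>w. \<Theta> w = 0 \<longleftrightarrow> w = 0"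
    and graph: "\<And>x. \<Theta> (x, F1 x) = (\<phi> x, F2 (\<phi> x))"
  shows "CCZ_equivalent F1 F2"
  unfolding CCZ_equivalent_def
proof (rule equiv_codes_if_bij_preimage[OF \<open>bij \<phi>\<close>])
  fix d :: "bit ^ 'm \<Rightarrow> bit"
  have "bij_betw \<phi> {x. d (\<phi> x) = 1} {y. d y = 1}"
    using \<open>bij \<phi>\<close> by (smt (verit, best) UNIV_I bij_betw_iff_bijections mem_Collect_eq)
  then have "(\<Sum>y | d y = 1. (y, F2 y)) = (\<Sum>x | d (\<phi> x) = 1. \<Theta> (x, F1 x))"
    by (simp only: graph sum.reindex_bij_betw[of _ _ _ "\<lambda>y. (y, F2 y)", symmetric])
  also have "\<dots> = \<Theta> (\<Sum>x | d (\<phi> x) = 1. (x, F1 x))"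
    using \<open>Modules.additive \<Theta>\<close> by (simp add: additive.sum)
  finally have "(\<Sum>y | d y = 1. (y, F2 y)) = 0 \<longleftrightarrow> (\<Sum>x | d (\<phi> x) = 1. (x, F1 x)) = 0"
    by (simp add: kernel)
  moreover have "sum d UNIV = sum (d \<circ> \<phi>) UNIV"
    using \<open>bij \<phi>\<close> sum.reindex_bij_betw[of \<phi> UNIV UNIV d] by (simp add: o_def)
  ultimately show "d \<in> code_F_ext F2 \<longleftrightarrow> d \<circ> \<phi> \<in> code_F_ext F1"
    using assms(1,2) by (simp add: code_F_ext_eq)
qed

lemma STS_triple_mem:
  assumes "a \<in> nonzeros" and "b \<in> nonzeros" and "a \<noteq> b"
  shows "{a, b, a + b} \<in> STS"
proof -
  have "a + b \<noteq> 0" and "a \<noteq> a + b" and "b \<noteq> a + b"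
    using assms by (auto simp: nonzeros_def bit_vec_add_eq_0_iff)
  moreover have "a + b + (a + b) = 0"
    by simp
  ultimately show ?thesis
    using assms unfolding STS_def nonzeros_def by blast
qed

lemma STS_block_sum:
  assumes "{x, y, z} \<in> STS"
  shows "x + y + z = 0"
proof -
  obtain p q r where pqr: "{x, y, z} = {p, q, r}" "p \<noteq> q" "p \<noteq> r" "q \<noteq> r" "p + q + r = 0"
    using assms unfolding STS_def by blast
  then have "card {x, y, z} = 3"
    by simp
  then have "x \<noteq> y" "x \<noteq> z" "y \<noteq> z"
    by (auto simp: card_insert_if split: if_splits)
  then have "x + y + z = sum id {x, y, z}"
    by (simp add: add.assoc)
  also have "\<dots> = p + q + r"
    using pqr by (simp add: add.assoc)
  finally show ?thesis
    using pqr by simp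
qed

text \<open>\<open>STS\<close> says nothing about \<open>g 0\<close>, hence the redefinition there.\<close>

lemma additive_if_preserves_STS:
  fixes g :: "bit ^ 'm \<Rightarrow> bit ^ 'm"
  assumes "blocks_image g STS \<subseteq> STS"
  shows "Modules.additive (g(0 := 0))"
proof
  fix u v :: "bit ^ 'm"
  show "(g(0 := 0)) (u + v) = (g(0 := 0)) u + (g(0 := 0)) v"
  proof (cases "u = 0 \<or> v = 0 \<or> u = v")
    case True
    then show ?thesis
      by (elim disjE) simp_all
  next
    case False
    then have "u \<in> nonzeros" "v \<in> nonzeros" "u + v \<noteq> 0"
      by (auto simp: nonzeros_def bit_vec_add_eq_0_iff)
    then have "{g u, g v, g (u + v)} \<in> STS"
      using assms STS_triple_mem[of u v] False unfolding blocks_image_def by auto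
    then have "g u + g v + g (u + v) = 0"
      by (rule STS_block_sum)
    then show ?thesis
      using False \<open>u + v \<noteq> 0\<close> by (simp add: bit_vec_add_eq_0_iff)
  qed
qed

lemma bij_if_additive_kernel_trivial:
  fixes f :: "'a::{ab_group_add, finite} \<Rightarrow> 'a"
  assumes "Modules.additive f" and "\<And>v. f v = 0 \<longleftrightarrow> v = 0"
  shows "bij f"
proof -
  have "inj f"
  proof (rule injI)
    fix u v assume "f u = f v"
    then have "f (u - v) = 0"
      using additive.diff[OF assms(1)] by simp
    then show "u = v"
      using assms(2) by simp
  qed
  then show ?thesis
    by (simp add: bij_def finite_UNIV_inj_surj)
qed

lemma blocks_image_comp: "blocks_image f (blocks_image g S) = blocks_image (f \<circ> g) S"
  by (simp add: blocks_image_def image_comp)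

lemma blocks_image_inv: "inj F \<Longrightarrow> blocks_image (inv F) (blocks_image F S) = S"
  by (simp add: blocks_image_comp) (simp add: blocks_image_def)

lemma image_nonzeros_subset: "inj F \<Longrightarrow> F 0 = 0 \<Longrightarrow> F ` nonzeros \<subseteq> nonzeros"
  by (auto simp: nonzeros_def) (metis injD)

lemma image_inv_nonzeros_subset: "bij F \<Longrightarrow> F 0 = 0 \<Longrightarrow> inv F ` nonzeros \<subseteq> nonzeros"
  by (metis bij_imp_bij_inv bij_is_inj bij_is_inj[THEN inv_f_eq] image_nonzeros_subset)

lemma STS_preserving_linearization:
  fixes g :: "bit ^ 'm \<Rightarrow> bit ^ 'm"
  assumes "g ` nonzeros \<subseteq> nonzeros" and "blocks_image g STS \<subseteq> STS"
  shows "Modules.additive (g(0 := 0))" and "(g(0 := 0)) v = 0 \<longleftrightarrow> v = 0" and "bij (g(0 := 0))"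
proof -
  show additive: "Modules.additive (g(0 := 0))"
    using assms(2) by (rule additive_if_preserves_STS)
  show kernel: "(g(0 := 0)) v = 0 \<longleftrightarrow> v = 0" for v
    using assms(1) by (auto simp: nonzeros_def)
  show "bij (g(0 := 0))"
    using additive kernel by (rule bij_if_additive_kernel_trivial)
qed

lemma CCZ_equivalent_if_iso_fixing_STS:
  fixes F1 F2 \<sigma> :: "bit ^ 'm \<Rightarrow> bit ^ 'm"
  assumes "bij F1" and "bij F2" and "F1 0 = 0" and "F2 0 = 0"
    and "\<sigma> ` nonzeros \<subseteq> nonzeros"
    and "blocks_image \<sigma> STS = STS"
    and "blocks_image \<sigma> (blocks_image F1 STS) = blocks_image F2 STS"
  shows "CCZ_equivalent F1 F2"
proof -
  define \<tau> where "\<tau> = inv F2 \<circ> \<sigma> \<circ> F1"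
  define L where "L = \<tau>(0 := 0)"
  define M where "M = \<sigma>(0 := 0)"
  have "blocks_image \<tau> STS = blocks_image (inv F2) (blocks_image \<sigma> (blocks_image F1 STS))"
    by (simp add: \<tau>_def blocks_image_comp comp_assoc)
  also have "\<dots> = STS"
    using assms(2,7) by (simp add: blocks_image_inv bij_is_inj)
  finally have "blocks_image \<tau> STS = STS" .
  have F1_nonzeros: "F1 ` nonzeros \<subseteq> nonzeros"
    using assms(1,3) by (simp add: image_nonzeros_subset bij_is_inj)
  moreover have "inv F2 ` nonzeros \<subseteq> nonzeros"
    using assms(2,4) by (rule image_inv_nonzeros_subset)
  ultimately have "\<tau> ` nonzeros \<subseteq> nonzeros"
    using assms(5) unfolding \<tau>_def by (auto simp: image_subset_iff)
  from STS_preserving_linearization[OF this equalityD1, OF \<open>blocks_image \<tau> STS = STS\<close>]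
  have L: "Modules.additive L" "\<And>v. L v = 0 \<longleftrightarrow> v = 0" "bij L"
    unfolding L_def by blast+
  from STS_preserving_linearization[OF assms(5) equalityD1, OF assms(6)]
  have M: "Modules.additive M" "\<And>v. M v = 0 \<longleftrightarrow> v = 0"
    unfolding M_def by blast+
  have graph: "M (F1 x) = F2 (L x)" for x
  proof (cases "x = 0")
    case False
    then have "F1 x \<noteq> 0"
      using F1_nonzeros by (auto simp: nonzeros_def)
    then show ?thesis
      using False assms(2) by (simp add: L_def M_def \<tau>_def bij_is_surj surj_f_inv_f)
  qed (simp add: L_def M_def assms(3,4))
  show ?thesis
  proof (rule CCZ_equivalent_if_graph_map[where \<phi> = L and \<Theta> = "map_prod L M"])
    show "bij L"
      by (fact L(3))
    show "Modules.additive (map_prod L M)"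
      using L(1) M(1) by (simp add: Modules.additive_def additive.add)
    show "map_prod L M w = 0 \<longleftrightarrow> w = 0" for w
      using L(2) M(2) by (cases w) (simp add: zero_prod_def)
  qed (simp_all add: assms(3,4) graph)
qed

lemma CCZ_equivalent_if_iso_swapping_STS:
  fixes F1 F2 \<sigma> :: "bit ^ 'm \<Rightarrow> bit ^ 'm"
  assumes "bij F1" and "bij F2" and "F1 0 = 0" and "F2 0 = 0"
    and "\<sigma> ` nonzeros \<subseteq> nonzeros"
    and "blocks_image \<sigma> STS = blocks_image F2 STS"
    and "blocks_image \<sigma> (blocks_image F1 STS) = STS"
  shows "CCZ_equivalent F1 F2"
proof -
  define \<rho> where "\<rho> = inv F2 \<circ> \<sigma>"
  define \<mu> where "\<mu> = \<sigma> \<circ> F1"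
  define R where "R = \<rho>(0 := 0)"
  define M where "M = \<mu>(0 := 0)"
  have "blocks_image \<rho> STS = blocks_image (inv F2) (blocks_image \<sigma> STS)"
    by (simp add: \<rho>_def blocks_image_comp)
  also have "\<dots> = STS"
    using assms(2,6) by (simp add: blocks_image_inv bij_is_inj)
  finally have \<rho>_STS: "blocks_image \<rho> STS = STS" .
  have "inv F2 ` nonzeros \<subseteq> nonzeros"
    using assms(2,4) by (rule image_inv_nonzeros_subset)
  then have "\<rho> ` nonzeros \<subseteq> nonzeros"
    using assms(5) by (auto simp: \<rho>_def image_subset_iff)
  from STS_preserving_linearization[OF this equalityD1, OF \<rho>_STS]
  have R: "Modules.additive R" "\<And>v. R v = 0 \<longleftrightarrow> v = 0" "bij R"
    unfolding R_def by blast+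
  have \<mu>_STS: "blocks_image \<mu> STS = STS"
    using assms(7) by (simp add: \<mu>_def blocks_image_comp)
  have F1_nonzeros: "F1 ` nonzeros \<subseteq> nonzeros"
    using assms(1,3) by (simp add: image_nonzeros_subset bij_is_inj)
  then have "\<mu> ` nonzeros \<subseteq> nonzeros"
    using assms(5) by (auto simp: \<mu>_def image_subset_iff)
  from STS_preserving_linearization[OF this equalityD1, OF \<mu>_STS]
  have M: "Modules.additive M" "\<And>v. M v = 0 \<longleftrightarrow> v = 0"
    unfolding M_def by blast+
  have graph: "M x = F2 (R (F1 x))" for x
  proof (cases "x = 0")
    case False
    then have "F1 x \<noteq> 0"
      using F1_nonzeros by (auto simp: nonzeros_def)
    then show ?thesis
      using False assms(2) by (simp add: R_def M_def \<rho>_def \<mu>_def bij_is_surj surj_f_inv_f)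
  qed (simp add: R_def M_def assms(3,4))
  show ?thesis
  proof (rule CCZ_equivalent_if_graph_map[where \<phi> = "R \<circ> F1" and \<Theta> = "\<lambda>(a, b). (R b, M a)"])
    show "bij (R \<circ> F1)"
      using R(3) assms(1) by (rule bij_comp[rotated])
    show "Modules.additive (\<lambda>(a, b). (R b, M a))"
      using R(1) M(1) by (simp add: Modules.additive_def additive.add split: prod.split)
    show "(case w of (a, b) \<Rightarrow> (R b, M a)) = 0 \<longleftrightarrow> w = 0" for w
      using R(2) M(2) by (cases w) (auto simp: zero_prod_def)
  qed (simp_all add: assms(3,4) graph)
qed

theorem mainTheorem12:
  fixes F1 F2 :: "bit ^ 'm \<Rightarrow> bit ^ 'm"
  assumes "bij F1" and "bij F2" and "F1 0 = 0" and "F2 0 = 0"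
    and "selfemb_iso F1 F2"
  shows "CCZ_equivalent F1 F2"
proof -
  obtain \<sigma> where "bij_betw \<sigma> nonzeros nonzeros"
    and cases: "blocks_image \<sigma> STS = STS \<and> blocks_image \<sigma> (blocks_image F1 STS) = blocks_image F2 STS
      \<or> blocks_image \<sigma> STS = blocks_image F2 STS \<and> blocks_image \<sigma> (blocks_image F1 STS) = STS"
    using assms(5) unfolding selfemb_iso_def by blast
  then have "\<sigma> ` nonzeros \<subseteq> nonzeros"
    by (simp add: bij_betw_def)
  with cases show ?thesis
    using CCZ_equivalent_if_iso_fixing_STS[OF assms(1-4)] CCZ_equivalent_if_iso_swapping_STS[OF assms(1-4)]
    by blast
qed

end
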